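(* Let $G$ be a finite $p$-group and let $\alpha\in Z^2(G,\mathbb{C}^\times)$. Then $G$ has a faithful irreducible $\alpha$-representation if and only if, for every non-trivial central subgroup $N$ of $G$, the class $[\alpha]$ does not lie in the image of the inflation map $\operatorname{inf}:\mathrm{H}^2(G/N,\mathbb{C}^\times)\to\mathrm{H}^2(G,\mathbb{C}^\times)$.
   Context: All groups are finite and all representations are over $\mathbb{C}$. For a cocycle $\alpha\in Z^2(G,\mathbb{C}^\times)$, an $\alpha$-representation of $G$ is a map $\rho:G\to \mathrm{GL}(V)$ ($V$ finite-dimensional) with $\rho(1)=1_V$ and $\rho(g)\rho(h)=\alpha(g,h)\rho(gh)$ for all $g,h$; it is irreducible if $V$ has no proper nonzero $\rho(G)$-invariant subspace. Its (projective) kernel is $\ker\rho=\{g\in G:\rho(g)=\lambda I_V \text{ for some }\lambda\in\mathbb{C}^\times\}$, and $\rho$ is faithful if $\ker\rho=1$. For $N\trianglelefteq G$ the inflation map sends the class of $\beta\in Z^2(G/N,\mathbb{C}^\times)$ to the class of $(x,y)\mapsto\beta(xN,yN)$. *)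

theory Defs
  imports "HOL-Algebra.Coset" "Jordan_Normal_Form.Matrix"
begin

definition p_group :: "nat \<Rightarrow> ('a, 'b) monoid_scheme \<Rightarrow> bool" where
  "p_group p G \<longleftrightarrow> group G \<and> prime p \<and> finite (carrier G) \<and> (\<exists>k. order G = p ^ k)"

definition cocycle2 :: "('a, 'b) monoid_scheme \<Rightarrow> ('a \<Rightarrow> 'a \<Rightarrow> complex) \<Rightarrow> bool" where
  "cocycle2 G \<alpha> \<longleftrightarrow>
     (\<forall>x\<in>carrier G. \<forall>y\<in>carrier G. \<alpha> x y \<noteq> 0) \<and>
     (\<forall>x\<in>carrier G. \<forall>y\<in>carrier G. \<forall>z\<in>carrier G.
        \<alpha> x y * \<alpha> (x \<otimes>\<^bsub>G\<^esub> y) z = \<alpha> x (y \<otimes>\<^bsub>G\<^esub> z) * \<alpha> y z)"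

definition cohomologous :: "('a, 'b) monoid_scheme \<Rightarrow> ('a \<Rightarrow> 'a \<Rightarrow> complex) \<Rightarrow> ('a \<Rightarrow> 'a \<Rightarrow> complex) \<Rightarrow> bool" where
  "cohomologous G \<alpha> \<beta> \<longleftrightarrow>
     (\<exists>\<mu>. (\<forall>x\<in>carrier G. \<mu> x \<noteq> 0) \<and>
          (\<forall>x\<in>carrier G. \<forall>y\<in>carrier G.
             \<alpha> x y = \<mu> x * \<mu> y / \<mu> (x \<otimes>\<^bsub>G\<^esub> y) * \<beta> x y))"

definition inflation :: "('a, 'b) monoid_scheme \<Rightarrow> 'a set \<Rightarrow> ('a set \<Rightarrow> 'a set \<Rightarrow> complex) \<Rightarrow> ('a \<Rightarrow> 'a \<Rightarrow> complex)" where
  "inflation G N \<beta> = (\<lambda>x y. \<beta> (N #>\<^bsub>G\<^esub> x) (N #>\<^bsub>G\<^esub> y))"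

(* [alpha] lies in the image of inf : H^2(G/N) -> H^2(G) *)
definition in_inflation_image :: "('a, 'b) monoid_scheme \<Rightarrow> 'a set \<Rightarrow> ('a \<Rightarrow> 'a \<Rightarrow> complex) \<Rightarrow> bool" where
  "in_inflation_image G N \<alpha> \<longleftrightarrow>
     (\<exists>\<beta>. cocycle2 (G Mod N) \<beta> \<and> cohomologous G \<alpha> (inflation G N \<beta>))"

definition central_subgroup :: "'a set \<Rightarrow> ('a, 'b) monoid_scheme \<Rightarrow> bool" where
  "central_subgroup N G \<longleftrightarrow> subgroup N G \<and>
     (\<forall>n\<in>N. \<forall>g\<in>carrier G. n \<otimes>\<^bsub>G\<^esub> g = g \<otimes>\<^bsub>G\<^esub> n)"

definition alpha_rep :: "('a, 'b) monoid_scheme \<Rightarrow> ('a \<Rightarrow> 'a \<Rightarrow> complex) \<Rightarrow> nat \<Rightarrow> ('a \<Rightarrow> complex mat) \<Rightarrow> bool" where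
  "alpha_rep G \<alpha> n \<rho> \<longleftrightarrow>
     (\<forall>g\<in>carrier G. \<rho> g \<in> carrier_mat n n \<and> invertible_mat (\<rho> g)) \<and>
     \<rho> \<one>\<^bsub>G\<^esub> = 1\<^sub>m n \<and>
     (\<forall>g\<in>carrier G. \<forall>h\<in>carrier G. \<rho> g * \<rho> h = \<alpha> g h \<cdot>\<^sub>m \<rho> (g \<otimes>\<^bsub>G\<^esub> h))"

definition invariant_subspace :: "('a, 'b) monoid_scheme \<Rightarrow> nat \<Rightarrow> ('a \<Rightarrow> complex mat) \<Rightarrow> complex vec set \<Rightarrow> bool" where
  "invariant_subspace G n \<rho> W \<longleftrightarrow>
     W \<subseteq> carrier_vec n \<and> 0\<^sub>v n \<in> W \<and>
     (\<forall>v\<in>W. \<forall>w\<in>W. v + w \<in> W) \<and>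
     (\<forall>c. \<forall>v\<in>W. c \<cdot>\<^sub>v v \<in> W) \<and>
     (\<forall>g\<in>carrier G. \<forall>v\<in>W. \<rho> g *\<^sub>v v \<in> W)"

definition irreducible_rep :: "('a, 'b) monoid_scheme \<Rightarrow> nat \<Rightarrow> ('a \<Rightarrow> complex mat) \<Rightarrow> bool" where
  "irreducible_rep G n \<rho> \<longleftrightarrow> n > 0 \<and>
     (\<forall>W. invariant_subspace G n \<rho> W \<longrightarrow> W = {0\<^sub>v n} \<or> W = carrier_vec n)"

definition proj_kernel :: "('a, 'b) monoid_scheme \<Rightarrow> nat \<Rightarrow> ('a \<Rightarrow> complex mat) \<Rightarrow> 'a set" where
  "proj_kernel G n \<rho> = {g \<in> carrier G. \<exists>c. c \<noteq> 0 \<and> \<rho> g = c \<cdot>\<^sub>m 1\<^sub>m n}"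

definition faithful_rep :: "('a, 'b) monoid_scheme \<Rightarrow> nat \<Rightarrow> ('a \<Rightarrow> complex mat) \<Rightarrow> bool" where
  "faithful_rep G n \<rho> \<longleftrightarrow> proj_kernel G n \<rho> = {\<one>\<^bsub>G\<^esub>}"

end

theory Submission
  imports Defs "HOL-Algebra.Group_Action" "Jordan_Normal_Form.Spectral_Radius"
    "HOL-Computational_Algebra.Primes"
begin

text \<open>
  The projective kernel of an \<open>\<alpha>\<close>-representation \<open>\<rho>\<close> is a normal subgroup, and for a normal
  subgroup \<open>N \<subseteq> ker \<rho>\<close> the matrices \<open>\<rho>(r C)\<close>, for representatives \<open>r C\<close> of the cosets \<open>C\<close>
  of \<open>N\<close>, form a projective representation of \<open>G/N\<close> whose factor set inflates to \<open>[\<alpha>]\<close>.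
  Conversely, if \<open>[\<alpha>]\<close> is inflated from \<open>G/N\<close> with \<open>N\<close> central, then \<open>\<alpha>(z, g) = \<alpha>(g, z)\<close>
  for \<open>z \<in> N\<close>, so \<open>\<rho>(z)\<close> commutes with \<open>\<rho>(G)\<close> and is scalar by Schur's lemma when \<open>\<rho>\<close> is
  irreducible; thus \<open>N \<subseteq> ker \<rho>\<close>. As a nontrivial normal subgroup of a \<open>p\<close>-group meets the
  centre nontrivially, \<open>ker \<rho> \<inter> Z(G)\<close> decides everything: if no nontrivial central subgroup
  inflates \<open>[\<alpha>]\<close>, every \<open>\<alpha>\<close>-representation is faithful, in particular one of minimal
  positive dimension, which is irreducible.
\<close>

section \<open>Matrices up to nonzero scalars\<close>

lemma smult_smult_mat: "a \<cdot>\<^sub>m (b \<cdot>\<^sub>m A) = (a * b) \<cdot>\<^sub>m (A :: 'a :: semigroup_mult mat)"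
  by (rule eq_matI) (auto simp: mult.assoc)

lemma one_smult_mat [simp]: "(1 :: 'a :: monoid_mult) \<cdot>\<^sub>m A = A"
  by (rule eq_matI) auto

lemma invertible_mat_right_inverse:
  assumes "A \<in> carrier_mat n n" "invertible_mat A"
  obtains B where "B \<in> carrier_mat n n" "A * B = 1\<^sub>m n"
proof -
  from assms obtain B where AB: "A * B = 1\<^sub>m n" and BA: "B * A = 1\<^sub>m (dim_row B)"
    unfolding invertible_mat_def inverts_mat_def by auto
  have "dim_row B = n" using arg_cong[OF BA, of dim_col] assms(1) by simp
  moreover have "dim_col B = n" using arg_cong[OF AB, of dim_col] by simp
  ultimately show thesis using that AB by blast
qed

lemma smult_mat_cancel:
  fixes A :: "'a :: field mat"
  assumes A: "A \<in> carrier_mat n n" "invertible_mat A" and n: "0 < n"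
    and eq: "c \<cdot>\<^sub>m A = d \<cdot>\<^sub>m A"
  shows "c = d"
proof -
  obtain B where B: "B \<in> carrier_mat n n" "A * B = 1\<^sub>m n"
    using invertible_mat_right_inverse[OF A] .
  have "c \<cdot>\<^sub>m 1\<^sub>m n = (c \<cdot>\<^sub>m A) * B" using A B by (simp add: mult_smult_assoc_mat)
  also have "\<dots> = d \<cdot>\<^sub>m 1\<^sub>m n" using A B eq by (simp add: mult_smult_assoc_mat)
  finally have "(c \<cdot>\<^sub>m 1\<^sub>m n) $$ (0, 0) = (d \<cdot>\<^sub>m (1\<^sub>m n :: 'a mat)) $$ (0, 0)" by simp
  thus ?thesis using n by simp
qed

definition proportional_mat :: "'a :: field mat \<Rightarrow> 'a mat \<Rightarrow> bool" where
  "proportional_mat A B \<longleftrightarrow> (\<exists>c. c \<noteq> 0 \<and> A = c \<cdot>\<^sub>m B)"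

lemma proportional_mat_refl [simp]: "proportional_mat A A"
  unfolding proportional_mat_def by (auto intro: exI[of _ 1])

lemma proportional_mat_smult: "c \<noteq> 0 \<Longrightarrow> proportional_mat (c \<cdot>\<^sub>m A) A"
  unfolding proportional_mat_def by blast

lemma proportional_mat_sym: "proportional_mat A B \<Longrightarrow> proportional_mat B A"
proof -
  assume "proportional_mat A B"
  then obtain c where "c \<noteq> 0" "A = c \<cdot>\<^sub>m B" unfolding proportional_mat_def by blast
  hence "B = inverse c \<cdot>\<^sub>m A" by (simp add: smult_smult_mat)
  thus ?thesis unfolding proportional_mat_def using \<open>c \<noteq> 0\<close> by (intro exI[of _ "inverse c"]) simp
qed

lemma proportional_mat_trans [trans]:
  "proportional_mat A B \<Longrightarrow> proportional_mat B C \<Longrightarrow> proportional_mat A C"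
  unfolding proportional_mat_def by (metis mult_eq_0_iff smult_smult_mat)

lemma proportional_mat_mult:
  assumes "proportional_mat A A'" "proportional_mat B B'"
    and "A' \<in> carrier_mat nr n" "B' \<in> carrier_mat n nc"
  shows "proportional_mat (A * B) (A' * B')"
proof -
  obtain a b where "a \<noteq> 0" "A = a \<cdot>\<^sub>m A'" "b \<noteq> 0" "B = b \<cdot>\<^sub>m B'"
    using assms(1,2) unfolding proportional_mat_def by blast
  have "(a \<cdot>\<^sub>m A') * (b \<cdot>\<^sub>m B') = (a * b) \<cdot>\<^sub>m (A' * B')"
    using assms(3,4) mult_smult_assoc_mat[of A' nr n "b \<cdot>\<^sub>m B'" nc a]
      mult_smult_distrib[of A' nr n B' nc b] by (simp add: smult_smult_mat)
  thus ?thesis unfolding proportional_mat_def using \<open>A = _\<close> \<open>B = _\<close> \<open>a \<noteq> 0\<close> \<open>b \<noteq> 0\<close>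
    by (intro exI[of _ "a * b"]) simp
qed

section \<open>Injective matrices and subspaces\<close>

lemma mult_mat_vec_unit_vec:
  fixes A :: "'a :: semiring_1 mat"
  assumes "A \<in> carrier_mat n m" "j < m"
  shows "A *\<^sub>v unit_vec m j = col A j"
  using assms by (intro eq_vecI) (auto simp: scalar_prod_def unit_vec_def if_distrib cong: if_cong)

lemma mat_eqI_mult_vec:
  fixes A :: "'a :: semiring_1 mat"
  assumes "A \<in> carrier_mat n m" "B \<in> carrier_mat n m"
    and "\<And>v. v \<in> carrier_vec m \<Longrightarrow> A *\<^sub>v v = B *\<^sub>v v"
  shows "A = B"
proof (rule mat_col_eqI)
  fix j assume "j < dim_col B"
  thus "col A j = col B j"
    using assms mult_mat_vec_unit_vec[of A n m j] mult_mat_vec_unit_vec[of B n m j] by simp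
qed (use assms in auto)

definition injective_mat :: "'a :: semiring_0 mat \<Rightarrow> bool" where
  "injective_mat B \<longleftrightarrow>
     (\<forall>x\<in>carrier_vec (dim_col B). B *\<^sub>v x = 0\<^sub>v (dim_row B) \<longrightarrow> x = 0\<^sub>v (dim_col B))"

lemma injective_matD:
  "B \<in> carrier_mat n k \<Longrightarrow> injective_mat B \<Longrightarrow> x \<in> carrier_vec k \<Longrightarrow> B *\<^sub>v x = 0\<^sub>v n \<Longrightarrow> x = 0\<^sub>v k"
  unfolding injective_mat_def by auto

lemma vec_eq_if_minus_eq_zero:
  fixes x y :: "'a :: ab_group_add vec"
  assumes "x \<in> carrier_vec k" "y \<in> carrier_vec k" "x - y = 0\<^sub>v k"
  shows "x = y"
proof (rule eq_vecI)
  fix i assume "i < dim_vec y"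
  hence "i < k" using assms(2) by simp
  have "x $ i - y $ i = (x - y) $ i" using assms(2) \<open>i < k\<close> by simp
  also have "\<dots> = 0" using assms(3) \<open>i < k\<close> by simp
  finally show "x $ i = y $ i" by simp
qed (use assms in auto)

lemma injective_mat_inj:
  fixes B :: "'a :: comm_ring_1 mat"
  assumes B: "B \<in> carrier_mat n k" "injective_mat B"
    and x: "x \<in> carrier_vec k" and y: "y \<in> carrier_vec k" and eq: "B *\<^sub>v x = B *\<^sub>v y"
  shows "x = y"
proof (rule vec_eq_if_minus_eq_zero[OF x y])
  have "B *\<^sub>v (x - y) = 0\<^sub>v n" using B x y eq by (simp add: mult_minus_distrib_mat_vec)
  thus "x - y = 0\<^sub>v k" using injective_matD[OF B] x y by simp
qed

lemma injective_mat_cancel_left: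
  fixes B :: "'a :: comm_ring_1 mat"
  assumes B: "B \<in> carrier_mat n k" "injective_mat B"
    and X: "X \<in> carrier_mat k m" and Y: "Y \<in> carrier_mat k m" and eq: "B * X = B * Y"
  shows "X = Y"
proof (rule mat_eqI_mult_vec[OF X Y])
  fix v :: "'a vec" assume v: "v \<in> carrier_vec m"
  have "B *\<^sub>v (X *\<^sub>v v) = B *\<^sub>v (Y *\<^sub>v v)"
    using B X Y v eq by (metis assoc_mult_mat_vec)
  thus "X *\<^sub>v v = Y *\<^sub>v v" using injective_mat_inj[OF B] X Y v by simp
qed

lemma injective_square_mat_surj:
  fixes B :: "'a :: field mat"
  assumes B: "B \<in> carrier_mat n n" "injective_mat B" and v: "v \<in> carrier_vec n"
  shows "\<exists>x\<in>carrier_vec n. B *\<^sub>v x = v"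
proof -
  have "det B \<noteq> 0"
    using det_0_iff_vec_prod_zero[OF B(1)] injective_matD[OF B] by auto
  then obtain C where C: "C \<in> carrier_mat n n" "B * C = 1\<^sub>m n"
    using det_non_zero_imp_unit[OF B(1), of "()"] unfolding Units_def ring_mat_def by auto
  hence "B *\<^sub>v (C *\<^sub>v v) = v" using B v by (metis assoc_mult_mat_vec one_mult_mat_vec)
  thus ?thesis using C v by (intro bexI[of _ "C *\<^sub>v v"]) auto
qed

lemma injective_mat_dim_le:
  fixes B :: "'a :: field mat"
  assumes B: "B \<in> carrier_mat n k" "injective_mat B"
  shows "k \<le> n"
proof (rule ccontr)
  assume "\<not> k \<le> n"
  hence nk: "n < k" by simp
  \<comment> \<open>pad \<open>B\<close> with zero rows to a square matrix that is still injective but misses \<open>e\<^sub>n\<close>\<close>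
  define P where "P = mat k k (\<lambda>(i, j). if i < n then B $$ (i, j) else 0)"
  have P: "P \<in> carrier_mat k k" unfolding P_def by simp
  have PB: "(P *\<^sub>v x) $ i = (B *\<^sub>v x) $ i" if "i < n" "x \<in> carrier_vec k" for i x
    using that nk B unfolding P_def by (simp add: scalar_prod_def)
  have P_inj: "injective_mat P"
    unfolding injective_mat_def
  proof (intro ballI impI)
    fix x assume x: "x \<in> carrier_vec (dim_col P)" and "P *\<^sub>v x = 0\<^sub>v (dim_row P)"
    have "B *\<^sub>v x = 0\<^sub>v n"
    proof (rule eq_vecI)
      fix i assume "i < dim_vec (0\<^sub>v n :: 'a vec)"
      hence "i < n" by simp
      hence "(B *\<^sub>v x) $ i = (P *\<^sub>v x) $ i" using PB x P by simp
      also have "\<dots> = 0" using \<open>P *\<^sub>v x = _\<close> \<open>i < n\<close> nk P by simp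
      finally show "(B *\<^sub>v x) $ i = 0\<^sub>v n $ i" using \<open>i < n\<close> by simp
    qed (use B in simp)
    thus "x = 0\<^sub>v (dim_col P)" using injective_matD[OF B] x P by simp
  qed
  obtain x where x: "x \<in> carrier_vec k" "P *\<^sub>v x = unit_vec k n"
    using injective_square_mat_surj[OF P P_inj, of "unit_vec k n"] by auto
  have "(P *\<^sub>v x) $ n = 0" using x(1) nk unfolding P_def by (simp add: scalar_prod_def)
  thus False using x nk by simp
qed

lemma mult_mat_vec_append_col:
  fixes B :: "'a :: comm_semiring_0 mat"
  assumes B: "B \<in> carrier_mat n k" and w: "w \<in> carrier_vec n" and x: "x \<in> carrier_vec (Suc k)"
  shows "mat n (Suc k) (\<lambda>(i, j). if j < k then B $$ (i, j) else w $ i) *\<^sub>v x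
    = B *\<^sub>v vec k (\<lambda>j. x $ j) + x $ k \<cdot>\<^sub>v w"
proof (rule eq_vecI)
  fix i assume "i < dim_vec (B *\<^sub>v vec k (\<lambda>j. x $ j) + x $ k \<cdot>\<^sub>v w)"
  hence i: "i < n" using w by simp
  have "(mat n (Suc k) (\<lambda>(i, j). if j < k then B $$ (i, j) else w $ i) *\<^sub>v x) $ i
      = (\<Sum>j<Suc k. (if j < k then B $$ (i, j) else w $ i) * x $ j)"
    using i x by (simp add: scalar_prod_def lessThan_atLeast0)
  also have "\<dots> = (\<Sum>j<k. B $$ (i, j) * x $ j) + w $ i * x $ k" by simp
  also have "\<dots> = (B *\<^sub>v vec k (\<lambda>j. x $ j) + x $ k \<cdot>\<^sub>v w) $ i"
    using i B w by (simp add: scalar_prod_def lessThan_atLeast0 mult.commute)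
  finally show "(mat n (Suc k) (\<lambda>(i, j). if j < k then B $$ (i, j) else w $ i) *\<^sub>v x) $ i
      = (B *\<^sub>v vec k (\<lambda>j. x $ j) + x $ k \<cdot>\<^sub>v w) $ i" .
qed (use B w in simp)

lemma coefficient_zero_if_not_in_range:
  fixes B :: "'a :: field mat"
  assumes B: "B \<in> carrier_mat n k" and w: "w \<in> carrier_vec n" "w \<notin> (\<lambda>x. B *\<^sub>v x) ` carrier_vec k"
    and y: "y \<in> carrier_vec k" and zero: "B *\<^sub>v y + c \<cdot>\<^sub>v w = 0\<^sub>v n"
  shows "c = 0"
proof (rule ccontr)
  assume "c \<noteq> 0"
  have "B *\<^sub>v ((- 1 / c) \<cdot>\<^sub>v y) = w"
  proof (rule eq_vecI)
    fix i assume "i < dim_vec w"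
    hence i: "i < n" using w(1) by simp
    have "(B *\<^sub>v y + c \<cdot>\<^sub>v w) $ i = 0" using zero i by simp
    moreover have "dim_vec w = n" using w(1) by simp
    ultimately have "(B *\<^sub>v y) $ i = - (c * w $ i)"
      using i by (simp only: index_add_vec(1) index_smult_vec eq_neg_iff_add_eq_0)
    moreover have "(B *\<^sub>v ((- 1 / c) \<cdot>\<^sub>v y)) $ i = (- 1 / c) * (B *\<^sub>v y) $ i"
      using B y i by (simp add: mult_mat_vec)
    ultimately show "(B *\<^sub>v ((- 1 / c) \<cdot>\<^sub>v y)) $ i = w $ i" using \<open>c \<noteq> 0\<close> by simp
  qed (use B w(1) in simp)
  moreover have "(- 1 / c) \<cdot>\<^sub>v y \<in> carrier_vec k" using y by simp
  ultimately show False using w(2) by (metis image_eqI)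
qed

lemma injective_mat_extend:
  fixes B :: "'a :: field mat"
  assumes B: "B \<in> carrier_mat n k" "injective_mat B"
    and w: "w \<in> carrier_vec n" "w \<notin> (\<lambda>x. B *\<^sub>v x) ` carrier_vec k"
  obtains B' where "B' \<in> carrier_mat n (Suc k)" "injective_mat B'"
    "\<And>x. x \<in> carrier_vec (Suc k) \<Longrightarrow> B' *\<^sub>v x = B *\<^sub>v vec k (\<lambda>j. x $ j) + x $ k \<cdot>\<^sub>v w"
proof -
  define B' where "B' = mat n (Suc k) (\<lambda>(i, j). if j < k then B $$ (i, j) else w $ i)"
  have B': "B' \<in> carrier_mat n (Suc k)" unfolding B'_def by simp
  note B'_mult = mult_mat_vec_append_col[OF B(1) w(1), folded B'_def]
  have "x = 0\<^sub>v (Suc k)" if x: "x \<in> carrier_vec (Suc k)" and x0: "B' *\<^sub>v x = 0\<^sub>v n" for x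
  proof -
    define y where "y = vec k (\<lambda>j. x $ j)"
    have y: "y \<in> carrier_vec k" unfolding y_def by simp
    have zero: "B *\<^sub>v y + x $ k \<cdot>\<^sub>v w = 0\<^sub>v n" using B'_mult[OF x] x0 unfolding y_def by argo
    have xk: "x $ k = 0" by (rule coefficient_zero_if_not_in_range[OF B(1) w y zero])
    moreover have "0 \<cdot>\<^sub>v w = 0\<^sub>v n" using w(1) by (intro eq_vecI) auto
    ultimately have "B *\<^sub>v y = 0\<^sub>v n" using zero B(1) y by simp
    hence y0: "y = 0\<^sub>v k" using injective_matD[OF B y] by simp
    show ?thesis
    proof (rule eq_vecI)
      fix j assume "j < dim_vec (0\<^sub>v (Suc k) :: 'a vec)"
      hence "j < k \<or> j = k" by auto
      thus "x $ j = 0\<^sub>v (Suc k) $ j"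
      proof
        assume "j < k"
        hence "x $ j = y $ j" unfolding y_def by simp
        thus ?thesis using y0 \<open>j < k\<close> by simp
      qed (use xk in simp)
    qed (use x in simp)
  qed
  hence "injective_mat B'" unfolding injective_mat_def using B' by auto
  with B' show thesis using B'_mult by (rule that)
qed

lemma subspace_eq_range_injective_mat:
  fixes W :: "'a :: field vec set"
  assumes W: "W \<subseteq> carrier_vec n" "0\<^sub>v n \<in> W"
    and add: "\<And>v w. v \<in> W \<Longrightarrow> w \<in> W \<Longrightarrow> v + w \<in> W"
    and smult: "\<And>c v. v \<in> W \<Longrightarrow> c \<cdot>\<^sub>v v \<in> W"
  obtains k B where "B \<in> carrier_mat n k" "injective_mat B" "W = (\<lambda>x. B *\<^sub>v x) ` carrier_vec k"
proof -
  \<comment> \<open>a maximal injective matrix with range inside \<open>W\<close> has range \<open>W\<close>\<close>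
  define S where "S = {k. \<exists>B \<in> carrier_mat n k. injective_mat B \<and> (\<lambda>x. B *\<^sub>v x) ` carrier_vec k \<subseteq> W}"
  have "0\<^sub>m n 0 *\<^sub>v x = 0\<^sub>v n" "x = 0\<^sub>v 0" if "x \<in> carrier_vec 0" for x :: "'a vec"
    using that by (auto intro!: eq_vecI simp: scalar_prod_def)
  hence "0 \<in> S" unfolding S_def injective_mat_def using W(2)
    by (intro CollectI bexI[of _ "0\<^sub>m n 0"]) auto
  have "S \<subseteq> {..n}" unfolding S_def using injective_mat_dim_le by auto
  hence "finite S" using finite_subset by blast
  define k where "k = Max S"
  have "k \<in> S" unfolding k_def using \<open>finite S\<close> \<open>0 \<in> S\<close> Max_in by blast
  then obtain B where B: "B \<in> carrier_mat n k" "injective_mat B"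
    and range: "(\<lambda>x. B *\<^sub>v x) ` carrier_vec k \<subseteq> W" unfolding S_def by blast
  have "W \<subseteq> (\<lambda>x. B *\<^sub>v x) ` carrier_vec k"
  proof
    fix w assume "w \<in> W"
    show "w \<in> (\<lambda>x. B *\<^sub>v x) ` carrier_vec k"
    proof (rule ccontr)
      assume w_notin: "w \<notin> (\<lambda>x. B *\<^sub>v x) ` carrier_vec k"
      have "w \<in> carrier_vec n" using \<open>w \<in> W\<close> W(1) by blast
      then obtain B' where "B' \<in> carrier_mat n (Suc k)" "injective_mat B'" and B'_mult:
          "\<And>x. x \<in> carrier_vec (Suc k) \<Longrightarrow> B' *\<^sub>v x = B *\<^sub>v vec k (\<lambda>j. x $ j) + x $ k \<cdot>\<^sub>v w"
        using injective_mat_extend[OF B _ w_notin] by blast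
      moreover have "B' *\<^sub>v x \<in> W" if "x \<in> carrier_vec (Suc k)" for x
        unfolding B'_mult[OF that] using range \<open>w \<in> W\<close> by (intro add smult) auto
      ultimately have "Suc k \<in> S" unfolding S_def by blast
      hence "Suc k \<le> Max S" by (rule Max_ge[OF \<open>finite S\<close>])
      thus False unfolding k_def by simp
    qed
  qed
  thus thesis using that B range by blast
qed

lemma mat_factor_through_range:
  fixes B C :: "'a :: semiring_1 mat"
  assumes B: "B \<in> carrier_mat n k" and C: "C \<in> carrier_mat n m"
    and range: "\<And>v. v \<in> carrier_vec m \<Longrightarrow> C *\<^sub>v v \<in> (\<lambda>x. B *\<^sub>v x) ` carrier_vec k"
  obtains S where "S \<in> carrier_mat k m" "B * S = C"
proof -
  have "\<exists>s. s \<in> carrier_vec k \<and> B *\<^sub>v s = col C j" if "j < m" for j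
    using range[of "unit_vec m j"] mult_mat_vec_unit_vec[OF C that] by auto
  then obtain s where s: "\<And>j. j < m \<Longrightarrow> s j \<in> carrier_vec k \<and> B *\<^sub>v s j = col C j"
    by metis
  define S where "S = mat k m (\<lambda>(i, j). s j $ i)"
  have S: "S \<in> carrier_mat k m" unfolding S_def by simp
  have "B * S = C"
  proof (rule mat_col_eqI)
    fix j assume "j < dim_col C"
    hence j: "j < m" using C by simp
    have "col S j = s j" using s[OF j] j unfolding S_def by (intro eq_vecI) auto
    thus "col (B * S) j = col C j" using col_mult2[OF B S j] s[OF j] by simp
  qed (use B C S in auto)
  thus thesis using that S by blast
qed

section \<open>Normal subgroups of \<open>p\<close>-groups meet the centre\<close>

definition center :: "('a, 'b) monoid_scheme \<Rightarrow> 'a set" where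
  "center G = {z \<in> carrier G. \<forall>g\<in>carrier G. z \<otimes>\<^bsub>G\<^esub> g = g \<otimes>\<^bsub>G\<^esub> z}"

lemma (in group) subgroup_center: "subgroup (center G) G"
proof (rule subgroupI)
  fix a assume "a \<in> center G"
  hence a: "a \<in> carrier G" and comm: "\<And>g. g \<in> carrier G \<Longrightarrow> a \<otimes> g = g \<otimes> a"
    unfolding center_def by auto
  have "inv a \<otimes> g = g \<otimes> inv a" if g: "g \<in> carrier G" for g
  proof -
    have "inv a \<otimes> g = inv a \<otimes> (g \<otimes> a) \<otimes> inv a" using a g by (simp add: m_assoc)
    also have "\<dots> = inv a \<otimes> (a \<otimes> g) \<otimes> inv a" by (simp only: comm[OF g])
    also have "\<dots> = g \<otimes> inv a" using a g by (simp add: m_assoc[symmetric])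
    finally show ?thesis .
  qed
  thus "inv a \<in> center G" using a unfolding center_def by blast
next
  fix a b assume "a \<in> center G" "b \<in> center G"
  hence a: "a \<in> carrier G" "\<And>g. g \<in> carrier G \<Longrightarrow> a \<otimes> g = g \<otimes> a"
    and b: "b \<in> carrier G" "\<And>g. g \<in> carrier G \<Longrightarrow> b \<otimes> g = g \<otimes> b"
    unfolding center_def by auto
  have "a \<otimes> b \<otimes> g = g \<otimes> (a \<otimes> b)" if g: "g \<in> carrier G" for g
  proof -
    have "a \<otimes> b \<otimes> g = a \<otimes> (g \<otimes> b)" using a(1) b g by (simp add: m_assoc)
    also have "\<dots> = a \<otimes> g \<otimes> b" using a(1) b(1) g by (simp add: m_assoc)
    also have "\<dots> = g \<otimes> (a \<otimes> b)" using a b(1) g by (simp add: m_assoc)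
    finally show ?thesis .
  qed
  thus "a \<otimes> b \<in> center G" using a(1) b(1) unfolding center_def by blast
next
  show "center G \<subseteq> carrier G" unfolding center_def by blast
  have "\<one> \<in> center G" unfolding center_def by simp
  thus "center G \<noteq> {}" by blast
qed

lemma (in group) central_subgroup_Int_center:
  "subgroup K G \<Longrightarrow> central_subgroup (K \<inter> center G) G"
  unfolding central_subgroup_def
  using subgroups_Inter_pair[OF _ subgroup_center] by (auto simp: center_def)

lemma (in group) central_subgroup_normal:
  assumes "central_subgroup N G"
  shows "N \<lhd> G"
  unfolding normal_inv_iff
proof (intro conjI ballI)
  show N: "subgroup N G" using assms unfolding central_subgroup_def by blast
  fix x h assume "x \<in> carrier G" "h \<in> N"
  moreover have "h \<otimes> x = x \<otimes> h" using assms \<open>x \<in> carrier G\<close> \<open>h \<in> N\<close>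
    unfolding central_subgroup_def by blast
  ultimately show "x \<otimes> h \<otimes> inv x \<in> N"
    using subgroup.mem_carrier[OF N] by (metis inv_solve_right m_closed inv_closed)
qed

lemma prime_dvd_if_dvd_prime_power:
  assumes "prime p" "m dvd p ^ e" "m \<noteq> 1"
  shows "p dvd (m :: nat)"
proof -
  obtain j where "m = p ^ j" using divides_primepow_nat[OF assms(1)] assms(2) by auto
  moreover from this have "j \<noteq> 0" using assms(3) by auto
  ultimately show ?thesis by (simp add: dvd_power)
qed

lemma (in group) prime_dvd_card_subgroup:
  assumes "card (carrier G) = p ^ e" "prime p" "subgroup K G" "K \<noteq> {\<one>}"
  shows "p dvd card K"
proof (rule prime_dvd_if_dvd_prime_power[OF assms(2)])
  show "card K dvd p ^ e" using lagrange[OF assms(3)] assms(1) unfolding Coset.order_def by (metis dvd_triv_right)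
  show "card K \<noteq> 1" using assms(4) subgroup.one_closed[OF assms(3)] by (auto simp: card_1_singleton_iff)
qed

lemma (in group_action) prime_dvd_card_orbit:
  assumes "card (carrier G) = p ^ e" "prime p" "x \<in> E" "orbit G \<phi> x \<noteq> {x}"
  shows "p dvd card (orbit G \<phi> x)"
proof (rule prime_dvd_if_dvd_prime_power[OF assms(2)])
  show "card (orbit G \<phi> x) dvd p ^ e"
    using orbit_stabilizer_theorem[OF assms(3)] assms(1) unfolding Coset.order_def by (metis dvd_triv_left)
  show "card (orbit G \<phi> x) \<noteq> 1" using assms(4) orbit_refl[OF assms(3)] by (auto simp: card_1_singleton_iff)
qed

lemma (in group_action) prime_dvd_card_union_of_nontrivial_orbits:
  assumes "finite E" "card (carrier G) = p ^ e" "prime p" "T \<subseteq> E"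
    and closed: "\<And>x. x \<in> T \<Longrightarrow> orbit G \<phi> x \<subseteq> T"
    and nontrivial: "\<And>x. x \<in> T \<Longrightarrow> orbit G \<phi> x \<noteq> {x}"
  shows "p dvd card T"
proof -
  let ?O = "orbit G \<phi> ` T"
  have T_eq: "T = \<Union> ?O" using closed orbit_refl assms(4) by blast
  have "orbit G \<phi> x \<in> orbits G E \<phi>" if "x \<in> T" for x
    using that assms(4) unfolding orbits_def by blast
  hence "pairwise disjnt ?O"
    unfolding pairwise_def disjnt_def using disjoint_union by blast
  moreover have "finite A" if "A \<in> ?O" for A
  proof -
    have "A \<subseteq> E" using that T_eq assms(4) by blast
    thus ?thesis using assms(1) finite_subset by blast
  qed
  ultimately have "card T = sum card ?O" using T_eq by (metis card_Union_disjoint)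
  moreover have "p dvd card A" if "A \<in> ?O" for A
    using that prime_dvd_card_orbit[OF assms(2,3)] nontrivial assms(4) by blast
  ultimately show ?thesis by (simp add: dvd_sum)
qed

lemma (in normal) prime_dvd_card_diff_center:
  assumes fin: "finite (carrier G)" and ord: "card (carrier G) = p ^ e" and p: "prime p"
  shows "p dvd card (H - center G)"
proof -
  define \<phi> where "\<phi> g = (\<lambda>h \<in> carrier G. g \<otimes> h \<otimes> inv g)" for g
  interpret conj: group_action G "carrier G" \<phi> unfolding \<phi>_def by (rule action_by_conjugation)
  have orbit_conj: "orbit G \<phi> x = {g \<otimes> x \<otimes> inv g | g. g \<in> carrier G}" if "x \<in> carrier G" for x
    unfolding orbit_def \<phi>_def using that by auto
  have conj_eq_iff: "g \<otimes> x \<otimes> inv g = x \<longleftrightarrow> x \<otimes> g = g \<otimes> x"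
    if "g \<in> carrier G" "x \<in> carrier G" for g x
    using that by (metis inv_closed inv_solve_right m_closed)
  \<comment> \<open>class equation: \<open>H - Z(G)\<close> is a union of conjugacy classes of size \<open>p\<^sup>j\<close>, \<open>j > 0\<close>\<close>
  show ?thesis
  proof (rule conj.prime_dvd_card_union_of_nontrivial_orbits[OF fin ord p])
    show "H - center G \<subseteq> carrier G" by auto
  next
    fix x assume x: "x \<in> H - center G"
    hence xG: "x \<in> carrier G" by auto
    show "orbit G \<phi> x \<subseteq> H - center G"
    proof
      fix y assume "y \<in> orbit G \<phi> x"
      then obtain g where g: "g \<in> carrier G" and y: "y = g \<otimes> x \<otimes> inv g"
        using orbit_conj[OF xG] by auto
      have "y \<notin> center G"
      proof
        assume "y \<in> center G"
        hence "inv g \<otimes> y \<otimes> inv (inv g) = y" using g conj_eq_iff[of "inv g" y] unfolding center_def by auto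
        moreover have "inv g \<otimes> y \<otimes> inv (inv g) = x"
          using y g xG by (simp add: m_assoc) (simp add: m_assoc[symmetric])
        ultimately show False using x \<open>y \<in> center G\<close> by simp
      qed
      thus "y \<in> H - center G" using inv_op_closed2[OF g] x y by auto
    qed
    obtain g where g: "g \<in> carrier G" "x \<otimes> g \<noteq> g \<otimes> x" using x xG unfolding center_def by auto
    hence "g \<otimes> x \<otimes> inv g \<noteq> x" using conj_eq_iff xG by blast
    moreover have "g \<otimes> x \<otimes> inv g \<in> orbit G \<phi> x" using orbit_conj[OF xG] g by auto
    ultimately show "orbit G \<phi> x \<noteq> {x}" by auto
  qed
qed

lemma (in group) p_group_normal_subgroup_meets_center:
  assumes fin: "finite (carrier G)" and ord: "card (carrier G) = p ^ e" and p: "prime p"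
    and K: "K \<lhd> G" "K \<noteq> {\<one>}"
  shows "K \<inter> center G \<noteq> {\<one>}"
proof -
  interpret K: normal K G by (rule K(1))
  have "finite K" using fin K.subset finite_subset by blast
  hence "card K = card (K \<inter> center G) + card (K - center G)" by (rule card_Int_Diff)
  moreover have "p dvd card K" by (rule prime_dvd_card_subgroup[OF ord p K.subgroup_axioms K(2)])
  moreover have "p dvd card (K - center G)" by (rule K.prime_dvd_card_diff_center[OF fin ord p])
  ultimately have "p dvd card (K \<inter> center G)" by (metis dvd_add_left_iff)
  moreover have "\<one> \<in> K \<inter> center G" using K.one_closed by (simp add: center_def)
  moreover from this have "card (K \<inter> center G) > 0"
    using \<open>finite K\<close> by (auto simp: card_gt_0_iff simp del: Int_iff)
  ultimately have "card (K \<inter> center G) \<ge> p" by (simp add: dvd_imp_le)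
  hence "card (K \<inter> center G) \<ge> 2" using prime_ge_2_nat[OF p] by simp
  thus ?thesis by auto
qed

section \<open>Cocycles and twisted representations\<close>

lemma cocycle2_nonzero:
  "cocycle2 H \<beta> \<Longrightarrow> x \<in> carrier H \<Longrightarrow> y \<in> carrier H \<Longrightarrow> \<beta> x y \<noteq> 0"
  unfolding cocycle2_def by blast

lemma cocycle2_identity:
  "cocycle2 H \<beta> \<Longrightarrow> x \<in> carrier H \<Longrightarrow> y \<in> carrier H \<Longrightarrow> z \<in> carrier H \<Longrightarrow>
    \<beta> x y * \<beta> (x \<otimes>\<^bsub>H\<^esub> y) z = \<beta> x (y \<otimes>\<^bsub>H\<^esub> z) * \<beta> y z"
  unfolding cocycle2_def by blast

lemma cocycle2_one_left:
  assumes H: "monoid H" and \<beta>: "cocycle2 H \<beta>" and y: "y \<in> carrier H"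
  shows "\<beta> \<one>\<^bsub>H\<^esub> y = \<beta> \<one>\<^bsub>H\<^esub> \<one>\<^bsub>H\<^esub>"
proof -
  note one = monoid.one_closed[OF H]
  have "\<beta> \<one>\<^bsub>H\<^esub> \<one>\<^bsub>H\<^esub> * \<beta> \<one>\<^bsub>H\<^esub> y = \<beta> \<one>\<^bsub>H\<^esub> y * \<beta> \<one>\<^bsub>H\<^esub> y"
    using cocycle2_identity[OF \<beta> one one y] by (simp add: monoid.l_one[OF H] one y)
  thus ?thesis using cocycle2_nonzero[OF \<beta> one y] by (metis mult_cancel_right)
qed

lemma cocycle2_one_right:
  assumes H: "monoid H" and \<beta>: "cocycle2 H \<beta>" and x: "x \<in> carrier H"
  shows "\<beta> x \<one>\<^bsub>H\<^esub> = \<beta> \<one>\<^bsub>H\<^esub> \<one>\<^bsub>H\<^esub>"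
proof -
  note one = monoid.one_closed[OF H]
  have "\<beta> x \<one>\<^bsub>H\<^esub> * \<beta> x \<one>\<^bsub>H\<^esub> = \<beta> x \<one>\<^bsub>H\<^esub> * \<beta> \<one>\<^bsub>H\<^esub> \<one>\<^bsub>H\<^esub>"
    using cocycle2_identity[OF \<beta> x one one] by (simp add: monoid.r_one[OF H] one x)
  thus ?thesis using cocycle2_nonzero[OF \<beta> x one] by (metis mult_cancel_left)
qed

lemma cocycle2_of_projective_rep:
  assumes H: "monoid H" and n: "0 < n"
    and \<sigma>: "\<And>X. X \<in> carrier H \<Longrightarrow> \<sigma> X \<in> carrier_mat n n \<and> invertible_mat (\<sigma> X)"
    and mult: "\<And>X Y. X \<in> carrier H \<Longrightarrow> Y \<in> carrier H \<Longrightarrow>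
      \<sigma> X * \<sigma> Y = \<beta> X Y \<cdot>\<^sub>m \<sigma> (X \<otimes>\<^bsub>H\<^esub> Y)"
    and nonzero: "\<And>X Y. X \<in> carrier H \<Longrightarrow> Y \<in> carrier H \<Longrightarrow> \<beta> X Y \<noteq> 0"
  shows "cocycle2 H \<beta>"
  unfolding cocycle2_def
proof (intro conjI ballI)
  fix X Y Z assume X: "X \<in> carrier H" and Y: "Y \<in> carrier H" and Z: "Z \<in> carrier H"
  let ?XY = "X \<otimes>\<^bsub>H\<^esub> Y" and ?YZ = "Y \<otimes>\<^bsub>H\<^esub> Z"
  have XY: "?XY \<in> carrier H" and YZ: "?YZ \<in> carrier H" using X Y Z H by (auto intro: monoid.m_closed)
  have assoc: "?XY \<otimes>\<^bsub>H\<^esub> Z = X \<otimes>\<^bsub>H\<^esub> ?YZ" using X Y Z H by (simp add: monoid.m_assoc)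
  have "(\<beta> X Y * \<beta> ?XY Z) \<cdot>\<^sub>m \<sigma> (?XY \<otimes>\<^bsub>H\<^esub> Z) = \<beta> X Y \<cdot>\<^sub>m (\<sigma> ?XY * \<sigma> Z)"
    using mult[OF XY Z] by (simp add: smult_smult_mat)
  also have "\<dots> = (\<sigma> X * \<sigma> Y) * \<sigma> Z"
    using mult[OF X Y] \<sigma>[OF XY] \<sigma>[OF Z] by (simp add: mult_smult_assoc_mat[of _ n n _ n])
  also have "\<dots> = \<sigma> X * (\<sigma> Y * \<sigma> Z)" using \<sigma>[OF X] \<sigma>[OF Y] \<sigma>[OF Z] by (meson assoc_mult_mat)
  also have "\<dots> = \<beta> Y Z \<cdot>\<^sub>m (\<sigma> X * \<sigma> ?YZ)"
    using mult[OF Y Z] \<sigma>[OF X] \<sigma>[OF YZ] by (simp add: mult_smult_distrib[of _ n n _ n])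
  also have "\<dots> = (\<beta> X ?YZ * \<beta> Y Z) \<cdot>\<^sub>m \<sigma> (X \<otimes>\<^bsub>H\<^esub> ?YZ)"
    using mult[OF X YZ] by (simp add: smult_smult_mat mult.commute)
  finally show "\<beta> X Y * \<beta> ?XY Z = \<beta> X ?YZ * \<beta> Y Z"
    using smult_mat_cancel[OF _ _ n] \<sigma>[OF XY] \<sigma>[of "X \<otimes>\<^bsub>H\<^esub> ?YZ"] X YZ H assoc
    by (metis monoid.m_closed)
qed (use nonzero in blast)

locale normalized_cocycle = group G for G (structure) +
  fixes \<alpha> :: "'a \<Rightarrow> 'a \<Rightarrow> complex"
  assumes cocycle: "cocycle2 G \<alpha>" and unit: "\<alpha> \<one> \<one> = 1"
begin

lemmas cocycle_nonzero = cocycle2_nonzero[OF cocycle]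

lemma cocycle_one_left [simp]: "x \<in> carrier G \<Longrightarrow> \<alpha> \<one> x = 1"
  using cocycle2_one_left[OF monoid_axioms cocycle] unit by simp

lemma alpha_repI:
  assumes carrier: "\<And>g. g \<in> carrier G \<Longrightarrow> \<rho> g \<in> carrier_mat n n" and one: "\<rho> \<one> = 1\<^sub>m n"
    and mult: "\<And>g h. g \<in> carrier G \<Longrightarrow> h \<in> carrier G \<Longrightarrow> \<rho> g * \<rho> h = \<alpha> g h \<cdot>\<^sub>m \<rho> (g \<otimes> h)"
  shows "alpha_rep G \<alpha> n \<rho>"
proof -
  have "invertible_mat (\<rho> g)" if g: "g \<in> carrier G" for g
  proof -
    define B where "B = (1 / \<alpha> g (inv g)) \<cdot>\<^sub>m \<rho> (inv g)"
    have B: "B \<in> carrier_mat n n" unfolding B_def using carrier g by simp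
    have "\<rho> g * B = (1 / \<alpha> g (inv g)) \<cdot>\<^sub>m (\<rho> g * \<rho> (inv g))"
      unfolding B_def using carrier[OF g] carrier[of "inv g"] g by (simp add: mult_smult_distrib)
    also have "\<dots> = 1\<^sub>m n"
      using mult[of g "inv g"] g one cocycle_nonzero[of g "inv g"] by (simp add: smult_smult_mat)
    finally have AB: "\<rho> g * B = 1\<^sub>m n" .
    moreover have "B * \<rho> g = 1\<^sub>m n" using mat_mult_left_right_inverse[OF carrier[OF g] B AB] .
    ultimately show ?thesis unfolding invertible_mat_def inverts_mat_def
      using carrier[OF g] B by (intro conjI exI[of _ B]) auto
  qed
  thus ?thesis unfolding alpha_rep_def using carrier one mult by auto
qed

text \<open>The twisted regular representation \<open>\<rho>(g) e\<^sub>x = \<alpha>(g, x) e\<^bsub>g x\<^esub>\<close>, with \<open>G\<close> enumerated by \<open>e\<close>.\<close>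

lemma regular_alpha_rep:
  assumes fin: "finite (carrier G)"
  shows "\<exists>\<rho>. alpha_rep G \<alpha> (card (carrier G)) \<rho>"
proof -
  define m where "m = card (carrier G)"
  obtain e where e: "bij_betw e {..<m} (carrier G)"
    using ex_bij_betw_nat_finite[OF fin] unfolding m_def lessThan_atLeast0 by blast
  have eG: "\<And>i. i < m \<Longrightarrow> e i \<in> carrier G" using e unfolding bij_betw_def by auto
  have e_inj: "\<And>i j. i < m \<Longrightarrow> j < m \<Longrightarrow> e i = e j \<longleftrightarrow> i = j"
    using e unfolding bij_betw_def inj_on_def by auto
  have e_surj: "\<And>x. x \<in> carrier G \<Longrightarrow> \<exists>i<m. e i = x"
    using e unfolding bij_betw_def by (metis imageE lessThan_iff)
  define \<rho> where "\<rho> g = mat m m (\<lambda>(i, j). if e i = g \<otimes> e j then \<alpha> g (e j) else 0)" for g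
  have one: "\<rho> \<one> = 1\<^sub>m m"
    by (rule eq_matI) (auto simp: \<rho>_def e_inj eG)
  have mult: "\<rho> g * \<rho> h = \<alpha> g h \<cdot>\<^sub>m \<rho> (g \<otimes> h)" if g: "g \<in> carrier G" and h: "h \<in> carrier G" for g h
  proof (rule eq_matI)
    fix i j assume "i < dim_row (\<alpha> g h \<cdot>\<^sub>m \<rho> (g \<otimes> h))" "j < dim_col (\<alpha> g h \<cdot>\<^sub>m \<rho> (g \<otimes> h))"
    hence i: "i < m" and j: "j < m" by (auto simp: \<rho>_def)
    have ej: "e j \<in> carrier G" using eG[OF j] .
    obtain l where l: "l < m" "e l = h \<otimes> e j" using e_surj[of "h \<otimes> e j"] h ej by auto
    have "(\<rho> g * \<rho> h) $$ (i, j) = (\<Sum>l'<m. \<rho> g $$ (i, l') * \<rho> h $$ (l', j))"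
      using i j by (simp add: \<rho>_def scalar_prod_def lessThan_atLeast0)
    also have "\<dots> = (\<Sum>l'<m. if l' = l then \<rho> g $$ (i, l) * \<alpha> h (e j) else 0)"
    proof (rule sum.cong)
      fix l' assume "l' \<in> {..<m}"
      hence "\<rho> h $$ (l', j) = (if l' = l then \<alpha> h (e j) else 0)"
        using j l e_inj[of l' l] by (auto simp: \<rho>_def)
      thus "\<rho> g $$ (i, l') * \<rho> h $$ (l', j) = (if l' = l then \<rho> g $$ (i, l) * \<alpha> h (e j) else 0)"
        by simp
    qed simp
    also have "\<dots> = (if e i = g \<otimes> (h \<otimes> e j) then \<alpha> g (h \<otimes> e j) * \<alpha> h (e j) else 0)"
      using i l by (simp add: \<rho>_def)
    also have "\<dots> = (if e i = g \<otimes> h \<otimes> e j then \<alpha> g h * \<alpha> (g \<otimes> h) (e j) else 0)"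
      using cocycle2_identity[OF cocycle g h ej] m_assoc[OF g h ej] by simp
    also have "\<dots> = (\<alpha> g h \<cdot>\<^sub>m \<rho> (g \<otimes> h)) $$ (i, j)"
      using i j by (simp add: \<rho>_def)
    finally show "(\<rho> g * \<rho> h) $$ (i, j) = (\<alpha> g h \<cdot>\<^sub>m \<rho> (g \<otimes> h)) $$ (i, j)" .
  qed (auto simp: \<rho>_def)
  have "alpha_rep G \<alpha> m \<rho>" by (rule alpha_repI) (use one mult in \<open>auto simp: \<rho>_def\<close>)
  thus ?thesis unfolding m_def by blast
qed

lemma alpha_rep_restrict:
  assumes \<rho>: "alpha_rep G \<alpha> n \<rho>" and B: "B \<in> carrier_mat n k" "injective_mat B"
    and invariant: "\<And>g x. g \<in> carrier G \<Longrightarrow> x \<in> carrier_vec k \<Longrightarrow>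
      \<rho> g *\<^sub>v (B *\<^sub>v x) \<in> (\<lambda>x. B *\<^sub>v x) ` carrier_vec k"
  shows "\<exists>\<sigma>. alpha_rep G \<alpha> k \<sigma>"
proof -
  have \<rho>_carrier: "\<And>g. g \<in> carrier G \<Longrightarrow> \<rho> g \<in> carrier_mat n n"
    and \<rho>_one: "\<rho> \<one> = 1\<^sub>m n"
    and \<rho>_mult: "\<And>g h. g \<in> carrier G \<Longrightarrow> h \<in> carrier G \<Longrightarrow> \<rho> g * \<rho> h = \<alpha> g h \<cdot>\<^sub>m \<rho> (g \<otimes> h)"
    using \<rho> unfolding alpha_rep_def by auto
  have "\<exists>S. S \<in> carrier_mat k k \<and> B * S = \<rho> g * B" if g: "g \<in> carrier G" for g
  proof -
    have "(\<rho> g * B) *\<^sub>v x \<in> (\<lambda>x. B *\<^sub>v x) ` carrier_vec k" if "x \<in> carrier_vec k" for x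
      using invariant[OF g that] \<rho>_carrier[OF g] B that by simp
    then obtain S where "S \<in> carrier_mat k k" "B * S = \<rho> g * B"
      using mat_factor_through_range[OF B(1), of "\<rho> g * B" k] \<rho>_carrier[OF g] B by auto
    thus ?thesis by blast
  qed
  then obtain \<sigma> where \<sigma>: "\<And>g. g \<in> carrier G \<Longrightarrow> \<sigma> g \<in> carrier_mat k k \<and> B * \<sigma> g = \<rho> g * B"
    by metis
  have carrier: "\<sigma> g \<in> carrier_mat k k" if "g \<in> carrier G" for g using \<sigma>[OF that] by blast
  have intertwine: "B * \<sigma> g = \<rho> g * B" if "g \<in> carrier G" for g using \<sigma>[OF that] by blast
  have "\<sigma> \<one> = 1\<^sub>m k"
  proof (rule injective_mat_cancel_left[OF B carrier])
    show "B * \<sigma> \<one> = B * 1\<^sub>m k" using intertwine[of \<one>] \<rho>_one B(1) by simp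
  qed auto
  moreover have "\<sigma> g * \<sigma> h = \<alpha> g h \<cdot>\<^sub>m \<sigma> (g \<otimes> h)" if g: "g \<in> carrier G" and h: "h \<in> carrier G" for g h
  proof (rule injective_mat_cancel_left[OF B, where m = k])
    have gh: "g \<otimes> h \<in> carrier G" using g h by simp
    note carriers = B(1) carrier[OF g] carrier[OF h] \<rho>_carrier[OF g] \<rho>_carrier[OF h]
    have "B * (\<sigma> g * \<sigma> h) = (B * \<sigma> g) * \<sigma> h" using carriers by (simp add: assoc_mult_mat)
    also have "\<dots> = \<rho> g * (B * \<sigma> h)" using carriers intertwine[OF g] by (simp add: assoc_mult_mat)
    also have "\<dots> = (\<rho> g * \<rho> h) * B" using carriers intertwine[OF h] by (simp add: assoc_mult_mat)
    also have "\<dots> = \<alpha> g h \<cdot>\<^sub>m (B * \<sigma> (g \<otimes> h))"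
      using \<rho>_mult[OF g h] intertwine[OF gh] B(1) \<rho>_carrier[OF gh]
      by (simp add: mult_smult_assoc_mat[of _ n n _ k])
    also have "\<dots> = B * (\<alpha> g h \<cdot>\<^sub>m \<sigma> (g \<otimes> h))"
      using B(1) carrier[OF gh] by (simp add: mult_smult_distrib[of _ n k _ k])
    finally show "B * (\<sigma> g * \<sigma> h) = B * (\<alpha> g h \<cdot>\<^sub>m \<sigma> (g \<otimes> h))" .
  qed (use carrier g h in \<open>auto intro: mult_carrier_mat\<close>)
  ultimately have "alpha_rep G \<alpha> k \<sigma>" using carrier by (intro alpha_repI) auto
  thus ?thesis by blast
qed

lemma alpha_rep_irreducible_if_minimal:
  assumes \<rho>: "alpha_rep G \<alpha> n \<rho>" and n: "0 < n"
    and minimal: "\<And>k \<sigma>. 0 < k \<Longrightarrow> k < n \<Longrightarrow> \<not> alpha_rep G \<alpha> k \<sigma>"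
  shows "irreducible_rep G n \<rho>"
  unfolding irreducible_rep_def
proof (intro conjI allI impI n)
  fix W assume "invariant_subspace G n \<rho> W"
  hence W_sub: "W \<subseteq> carrier_vec n" and W0: "0\<^sub>v n \<in> W"
    and add: "\<And>v w. v \<in> W \<Longrightarrow> w \<in> W \<Longrightarrow> v + w \<in> W"
    and smult: "\<And>c v. v \<in> W \<Longrightarrow> c \<cdot>\<^sub>v v \<in> W"
    and inv: "\<And>g v. g \<in> carrier G \<Longrightarrow> v \<in> W \<Longrightarrow> \<rho> g *\<^sub>v v \<in> W"
    unfolding invariant_subspace_def by auto
  obtain k B where B: "B \<in> carrier_mat n k" "injective_mat B" and W_eq: "W = (\<lambda>x. B *\<^sub>v x) ` carrier_vec k"
    by (rule subspace_eq_range_injective_mat[OF W_sub W0 add smult])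
  have "\<rho> g *\<^sub>v (B *\<^sub>v x) \<in> (\<lambda>x. B *\<^sub>v x) ` carrier_vec k"
    if "g \<in> carrier G" "x \<in> carrier_vec k" for g x
    using inv[OF that(1)] that(2) unfolding W_eq by blast
  then obtain \<sigma> where "alpha_rep G \<alpha> k \<sigma>" using alpha_rep_restrict[OF \<rho> B] by blast
  hence "k = 0 \<or> k = n" using minimal injective_mat_dim_le[OF B] by fastforce
  thus "W = {0\<^sub>v n} \<or> W = carrier_vec n"
  proof
    assume "k = 0"
    hence "B *\<^sub>v x = 0\<^sub>v n" if "x \<in> carrier_vec k" for x
      using B(1) that by (intro eq_vecI) (auto simp: scalar_prod_def)
    hence "W \<subseteq> {0\<^sub>v n}" unfolding W_eq by blast
    thus ?thesis using W0 by blast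
  next
    assume "k = n"
    have "v \<in> W" if "v \<in> carrier_vec n" for v
      using injective_square_mat_surj[OF B[unfolded \<open>k = n\<close>] that] unfolding W_eq \<open>k = n\<close> by blast
    thus ?thesis using W_sub by blast
  qed
qed

lemma exists_irreducible_alpha_rep:
  assumes fin: "finite (carrier G)"
  shows "\<exists>n \<rho>. alpha_rep G \<alpha> n \<rho> \<and> irreducible_rep G n \<rho>"
proof -
  define P where "P n \<longleftrightarrow> 0 < n \<and> (\<exists>\<rho>. alpha_rep G \<alpha> n \<rho>)" for n
  have "P (card (carrier G))"
    unfolding P_def using regular_alpha_rep[OF fin] fin card_gt_0_iff by blast
  define n where "n = (LEAST n. P n)"
  have "P n" unfolding n_def by (rule LeastI) fact
  then obtain \<rho> where \<rho>: "alpha_rep G \<alpha> n \<rho>" and n: "0 < n" unfolding P_def by blast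
  have "\<not> alpha_rep G \<alpha> k \<sigma>" if "0 < k" "k < n" for k \<sigma>
    using not_less_Least[of k P] that unfolding n_def P_def by blast
  thus ?thesis using alpha_rep_irreducible_if_minimal[OF \<rho> n] \<rho> by blast
qed

end

section \<open>Projective kernels and inflation\<close>

lemma (in group) inflated_cocycle_symmetric_on_central:
  assumes N: "central_subgroup N G" and infl: "in_inflation_image G N \<alpha>"
    and z: "z \<in> N" and g: "g \<in> carrier G"
  shows "\<alpha> z g = \<alpha> g z"
proof -
  interpret N: normal N G using central_subgroup_normal[OF N] .
  obtain \<beta> \<mu> where \<beta>: "cocycle2 (G Mod N) \<beta>"
    and \<alpha>: "\<And>x y. x \<in> carrier G \<Longrightarrow> y \<in> carrier G \<Longrightarrow>
      \<alpha> x y = \<mu> x * \<mu> y / \<mu> (x \<otimes> y) * \<beta> (N #> x) (N #> y)"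
    using infl unfolding in_inflation_image_def cohomologous_def inflation_def by blast
  have zG: "z \<in> carrier G" using z N.subset by blast
  have zg: "z \<otimes> g = g \<otimes> z" using N z g unfolding central_subgroup_def by blast
  have one: "N #> z = \<one>\<^bsub>G Mod N\<^esub>" using coset_join2[OF zG N.subgroup_axioms z] by simp
  have gN: "N #> g \<in> carrier (G Mod N)" using g N.subset unfolding FactGroup_def by (simp add: rcosetsI)
  note Mod_monoid = group.is_monoid[OF N.factorgroup_is_group]
  have "\<beta> (N #> z) (N #> g) = \<beta> (N #> g) (N #> z)"
    unfolding one cocycle2_one_left[OF Mod_monoid \<beta> gN] cocycle2_one_right[OF Mod_monoid \<beta> gN] ..
  thus ?thesis using \<alpha>[OF zG g] \<alpha>[OF g zG] zg by (simp add: mult.commute)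
qed

locale alpha_representation = normalized_cocycle +
  fixes n :: nat and \<rho> :: "'a \<Rightarrow> complex mat"
  assumes rep: "alpha_rep G \<alpha> n \<rho>" and dim_pos: "0 < n"
begin

lemma rep_carrier: "g \<in> carrier G \<Longrightarrow> \<rho> g \<in> carrier_mat n n"
  and rep_invertible: "g \<in> carrier G \<Longrightarrow> invertible_mat (\<rho> g)"
  and rep_one: "\<rho> \<one> = 1\<^sub>m n"
  and rep_mult: "g \<in> carrier G \<Longrightarrow> h \<in> carrier G \<Longrightarrow> \<rho> g * \<rho> h = \<alpha> g h \<cdot>\<^sub>m \<rho> (g \<otimes> h)"
  using rep unfolding alpha_rep_def by auto

lemma rep_smult_cancel: "g \<in> carrier G \<Longrightarrow> c \<cdot>\<^sub>m \<rho> g = d \<cdot>\<^sub>m \<rho> g \<Longrightarrow> c = d"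
  using smult_mat_cancel[OF rep_carrier rep_invertible dim_pos] .

lemma rep_mult_proportional:
  assumes "x \<in> carrier G" "y \<in> carrier G"
  shows "proportional_mat (\<rho> (x \<otimes> y)) (\<rho> x * \<rho> y)"
proof (rule proportional_mat_sym)
  show "proportional_mat (\<rho> x * \<rho> y) (\<rho> (x \<otimes> y))"
    using rep_mult[OF assms] cocycle_nonzero[OF assms] by (simp add: proportional_mat_smult)
qed

lemma mem_proj_kernel_iff:
  "g \<in> proj_kernel G n \<rho> \<longleftrightarrow> g \<in> carrier G \<and> proportional_mat (\<rho> g) (1\<^sub>m n)"
  unfolding proj_kernel_def proportional_mat_def by simp

lemma proj_kernel_normal: "proj_kernel G n \<rho> \<lhd> G"
  unfolding normal_inv_iff
proof (intro conjI ballI subgroupI)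
  show "proj_kernel G n \<rho> \<subseteq> carrier G" unfolding proj_kernel_def by blast
  have "\<one> \<in> proj_kernel G n \<rho>" using rep_one by (simp add: mem_proj_kernel_iff)
  thus "proj_kernel G n \<rho> \<noteq> {}" by blast
next
  fix a b assume "a \<in> proj_kernel G n \<rho>" "b \<in> proj_kernel G n \<rho>"
  hence a: "a \<in> carrier G" "proportional_mat (\<rho> a) (1\<^sub>m n)"
    and b: "b \<in> carrier G" "proportional_mat (\<rho> b) (1\<^sub>m n)" by (auto simp: mem_proj_kernel_iff)
  have "proportional_mat (\<rho> (a \<otimes> b)) (\<rho> a * \<rho> b)" using rep_mult_proportional[OF a(1) b(1)] .
  also have "proportional_mat \<dots> (1\<^sub>m n * 1\<^sub>m n)" using a b by (intro proportional_mat_mult[where nr = n and n = n and nc = n]) auto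
  finally show "a \<otimes> b \<in> proj_kernel G n \<rho>" using a b by (simp add: mem_proj_kernel_iff)
next
  fix a assume "a \<in> proj_kernel G n \<rho>"
  hence a: "a \<in> carrier G" "proportional_mat (\<rho> a) (1\<^sub>m n)" by (auto simp: mem_proj_kernel_iff)
  have "proportional_mat (1\<^sub>m n) (\<rho> (inv a \<otimes> a))" using a(1) rep_one by simp
  also have "proportional_mat \<dots> (\<rho> (inv a) * \<rho> a)" using a(1) by (intro rep_mult_proportional) auto
  also have "proportional_mat \<dots> (\<rho> (inv a) * 1\<^sub>m n)"
    using a rep_carrier by (intro proportional_mat_mult[where nr = n and n = n and nc = n]) auto
  also have "\<rho> (inv a) * 1\<^sub>m n = \<rho> (inv a)" using a(1) rep_carrier[of "inv a"] by simp
  finally show "inv a \<in> proj_kernel G n \<rho>"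
    using a(1) by (simp add: mem_proj_kernel_iff proportional_mat_sym[of "1\<^sub>m n"])
next
  fix g a assume g: "g \<in> carrier G" and "a \<in> proj_kernel G n \<rho>"
  hence a: "a \<in> carrier G" "proportional_mat (\<rho> a) (1\<^sub>m n)" by (auto simp: mem_proj_kernel_iff)
  note carriers = rep_carrier[OF g] rep_carrier[OF a(1)] rep_carrier[of "inv g"]
  have "proportional_mat (\<rho> (g \<otimes> a \<otimes> inv g)) (\<rho> (g \<otimes> a) * \<rho> (inv g))"
    using g a by (intro rep_mult_proportional) auto
  also have "proportional_mat \<dots> ((\<rho> g * \<rho> a) * \<rho> (inv g))"
    using g a carriers
    by (intro proportional_mat_mult[where nr = n and n = n and nc = n] rep_mult_proportional) auto
  also have "proportional_mat \<dots> ((\<rho> g * 1\<^sub>m n) * \<rho> (inv g))"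
    using g a carriers by (intro proportional_mat_mult[where nr = n and n = n and nc = n]) auto
  also have "(\<rho> g * 1\<^sub>m n) * \<rho> (inv g) = \<rho> g * \<rho> (inv g)" using carriers by simp
  also have "proportional_mat \<dots> (\<rho> (g \<otimes> inv g))"
    using g by (intro proportional_mat_sym[OF rep_mult_proportional]) auto
  finally show "g \<otimes> a \<otimes> inv g \<in> proj_kernel G n \<rho>"
    using g a rep_one by (simp add: mem_proj_kernel_iff)
qed

lemma eigenspace_invariant_subspace:
  assumes A: "A \<in> carrier_mat n n" and comm: "\<And>g. g \<in> carrier G \<Longrightarrow> \<rho> g * A = A * \<rho> g"
  shows "invariant_subspace G n \<rho> {w \<in> carrier_vec n. A *\<^sub>v w = a \<cdot>\<^sub>v w}"
    (is "invariant_subspace _ _ _ ?W")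
  unfolding invariant_subspace_def
proof (intro conjI ballI allI)
  show "?W \<subseteq> carrier_vec n" "0\<^sub>v n \<in> ?W" using A by auto
next
  fix v w assume "v \<in> ?W" "w \<in> ?W"
  hence v: "v \<in> carrier_vec n" "A *\<^sub>v v = a \<cdot>\<^sub>v v" and w: "w \<in> carrier_vec n" "A *\<^sub>v w = a \<cdot>\<^sub>v w"
    by auto
  have "A *\<^sub>v (v + w) = a \<cdot>\<^sub>v (v + w)"
    using A v w by (simp add: mult_add_distrib_mat_vec smult_add_distrib_vec)
  thus "v + w \<in> ?W" using v w by simp
next
  fix c v assume "v \<in> ?W"
  thus "c \<cdot>\<^sub>v v \<in> ?W" using A
    by (simp add: mult_mat_vec smult_smult_assoc mult.commute)
next
  fix g v assume g: "g \<in> carrier G" and "v \<in> ?W"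
  hence v: "v \<in> carrier_vec n" "A *\<^sub>v v = a \<cdot>\<^sub>v v" by auto
  have "A *\<^sub>v (\<rho> g *\<^sub>v v) = \<rho> g *\<^sub>v (A *\<^sub>v v)"
    using A rep_carrier[OF g] v comm[OF g] by (metis assoc_mult_mat_vec)
  also have "\<dots> = a \<cdot>\<^sub>v (\<rho> g *\<^sub>v v)" using rep_carrier[OF g] v by (simp add: mult_mat_vec)
  finally show "\<rho> g *\<^sub>v v \<in> ?W" using rep_carrier[OF g] v by simp
qed

lemma schur_scalar:
  assumes irr: "irreducible_rep G n \<rho>" and A: "A \<in> carrier_mat n n"
    and comm: "\<And>g. g \<in> carrier G \<Longrightarrow> \<rho> g * A = A * \<rho> g"
  shows "\<exists>a. A = a \<cdot>\<^sub>m 1\<^sub>m n"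
proof -
  obtain a where "eigenvalue A a" using spectrum_non_empty[OF A dim_pos] unfolding spectrum_def by auto
  then obtain v where v: "eigenvector A v a" unfolding eigenvalue_def by blast
  have "v \<in> {w \<in> carrier_vec n. A *\<^sub>v w = a \<cdot>\<^sub>v w}" "v \<noteq> 0\<^sub>v n" using v A unfolding eigenvector_def by auto
  hence "{w \<in> carrier_vec n. A *\<^sub>v w = a \<cdot>\<^sub>v w} = carrier_vec n"
    using irr eigenspace_invariant_subspace[OF A comm] unfolding irreducible_rep_def by blast
  hence "A *\<^sub>v w = a \<cdot>\<^sub>v w" if "w \<in> carrier_vec n" for w using that by blast
  moreover have "(a \<cdot>\<^sub>m 1\<^sub>m n) *\<^sub>v w = a \<cdot>\<^sub>v w" if "w \<in> carrier_vec n" for w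
    using that by (intro eq_vecI) auto
  ultimately have "A = a \<cdot>\<^sub>m 1\<^sub>m n" using A by (intro mat_eqI_mult_vec[of _ n n]) auto
  thus ?thesis by blast
qed

lemma central_subgroup_subset_proj_kernel:
  assumes irr: "irreducible_rep G n \<rho>" and N: "central_subgroup N G"
    and infl: "in_inflation_image G N \<alpha>"
  shows "N \<subseteq> proj_kernel G n \<rho>"
proof
  fix z assume z: "z \<in> N"
  have zG: "z \<in> carrier G" using N z unfolding central_subgroup_def by (auto dest: subgroup.mem_carrier)
  have "\<rho> g * \<rho> z = \<rho> z * \<rho> g" if g: "g \<in> carrier G" for g
  proof -
    have "z \<otimes> g = g \<otimes> z" using N z g unfolding central_subgroup_def by blast
    thus ?thesis using rep_mult[OF g zG] rep_mult[OF zG g]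
        inflated_cocycle_symmetric_on_central[OF N infl z g] by simp
  qed
  then obtain c where c: "\<rho> z = c \<cdot>\<^sub>m 1\<^sub>m n" using schur_scalar[OF irr rep_carrier[OF zG]] by blast
  have "c \<noteq> 0"
  proof
    assume "c = 0"
    hence "1 \<cdot>\<^sub>m \<rho> z = 0 \<cdot>\<^sub>m \<rho> z" using c by (simp add: smult_smult_mat)
    thus False using rep_smult_cancel[OF zG] by (metis zero_neq_one)
  qed
  thus "z \<in> proj_kernel G n \<rho>" unfolding proj_kernel_def using zG c by blast
qed

lemma proj_kernel_coset_representatives:
  assumes N: "N \<lhd> G" and NK: "N \<subseteq> proj_kernel G n \<rho>"
  obtains r \<nu> where "\<And>x. x \<in> carrier G \<Longrightarrow> r (N #> x) \<in> carrier G \<and> N #> r (N #> x) = N #> x"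
    and "\<And>x. x \<in> carrier G \<Longrightarrow> \<nu> x \<noteq> 0 \<and> \<rho> x = \<nu> x \<cdot>\<^sub>m \<rho> (r (N #> x))"
proof -
  interpret N: normal N G by (rule N)
  define r where "r C = (SOME x. x \<in> C)" for C :: "'a set"
  have r_mem: "r (N #> x) \<in> N #> x" if "x \<in> carrier G" for x
    unfolding r_def using rcos_self[OF that N.subgroup_axioms] by (rule someI)
  have r: "r (N #> x) \<in> carrier G \<and> N #> r (N #> x) = N #> x" if x: "x \<in> carrier G" for x
    using r_mem[OF x] x repr_independence[OF r_mem[OF x] x N.subgroup_axioms]
      N.elemrcos_carrier[OF is_group x] by auto
  have "proportional_mat (\<rho> x) (\<rho> (r (N #> x)))" if x: "x \<in> carrier G" for x
  proof -
    obtain h where h: "h \<in> N" and rx: "r (N #> x) = h \<otimes> x"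
      using r_mem[OF x] unfolding r_coset_def by blast
    have hG: "h \<in> carrier G" using h N.subset by blast
    have "proportional_mat (\<rho> (r (N #> x))) (\<rho> h * \<rho> x)"
      unfolding rx using hG x by (rule rep_mult_proportional)
    also have "proportional_mat \<dots> (1\<^sub>m n * \<rho> x)"
      using NK h rep_carrier[OF x] unfolding mem_proj_kernel_iff[symmetric]
      by (intro proportional_mat_mult[where nr = n and n = n and nc = n]) (auto simp: mem_proj_kernel_iff)
    also have "1\<^sub>m n * \<rho> x = \<rho> x" using rep_carrier[OF x] by simp
    finally show ?thesis by (rule proportional_mat_sym)
  qed
  then obtain \<nu> where "\<And>x. x \<in> carrier G \<Longrightarrow> \<nu> x \<noteq> 0 \<and> \<rho> x = \<nu> x \<cdot>\<^sub>m \<rho> (r (N #> x))"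
    unfolding proportional_mat_def by metis
  with r show thesis by (rule that)
qed

lemma coset_representatives_factor_set:
  assumes N: "N \<lhd> G"
    and r: "\<And>x. x \<in> carrier G \<Longrightarrow> r (N #> x) \<in> carrier G \<and> N #> r (N #> x) = N #> x"
    and \<nu>: "\<And>x. x \<in> carrier G \<Longrightarrow> \<nu> x \<noteq> 0 \<and> \<rho> x = \<nu> x \<cdot>\<^sub>m \<rho> (r (N #> x))"
    and x: "x \<in> carrier G" and y: "y \<in> carrier G"
  shows "\<rho> (r (N #> x)) * \<rho> (r (N #> y))
    = (\<alpha> (r (N #> x)) (r (N #> y)) * \<nu> (r (N #> x) \<otimes> r (N #> y))) \<cdot>\<^sub>m \<rho> (r (N #> (x \<otimes> y)))"
proof -
  interpret N: normal N G by (rule N)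
  let ?x = "r (N #> x)" and ?y = "r (N #> y)"
  have xy: "?x \<in> carrier G" "?y \<in> carrier G" using r x y by auto
  have "N #> (?x \<otimes> ?y) = N #> (x \<otimes> y)"
    using r[OF x] r[OF y] N.rcos_sum[OF xy] N.rcos_sum[OF x y] by simp
  thus ?thesis using rep_mult[OF xy] \<nu>[of "?x \<otimes> ?y"] xy by (simp add: smult_smult_mat)
qed

lemma in_inflation_image_if_subset_proj_kernel:
  assumes N: "N \<lhd> G" and NK: "N \<subseteq> proj_kernel G n \<rho>"
  shows "in_inflation_image G N \<alpha>"
proof -
  interpret N: normal N G by (rule N)
  obtain r \<nu> where r: "\<And>x. x \<in> carrier G \<Longrightarrow> r (N #> x) \<in> carrier G \<and> N #> r (N #> x) = N #> x"
    and \<nu>: "\<And>x. x \<in> carrier G \<Longrightarrow> \<nu> x \<noteq> 0 \<and> \<rho> x = \<nu> x \<cdot>\<^sub>m \<rho> (r (N #> x))"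
    using proj_kernel_coset_representatives[OF N NK] by blast
  \<comment> \<open>the factor set of \<open>C \<mapsto> \<rho> (r C)\<close>, read off from
    \<open>\<rho> (r C) \<rho> (r D) = \<alpha> (r C) (r D) \<rho> (r C r D) = \<alpha> (r C) (r D) \<nu> (r C r D) \<rho> (r (C D))\<close>\<close>
  define \<beta> where "\<beta> C D = \<alpha> (r C) (r D) * \<nu> (r C \<otimes> r D)" for C D
  have factor_set: "\<rho> (r (N #> x)) * \<rho> (r (N #> y)) = \<beta> (N #> x) (N #> y) \<cdot>\<^sub>m \<rho> (r (N #> (x \<otimes> y)))"
    if "x \<in> carrier G" "y \<in> carrier G" for x y
    using coset_representatives_factor_set[OF N r \<nu> that] unfolding \<beta>_def .
  have \<beta>_nonzero: "\<beta> (N #> x) (N #> y) \<noteq> 0" if "x \<in> carrier G" "y \<in> carrier G" for x y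
    using cocycle_nonzero r[OF that(1)] r[OF that(2)] \<nu> unfolding \<beta>_def by simp
  have "cocycle2 (G Mod N) \<beta>"
  proof (rule cocycle2_of_projective_rep[OF group.is_monoid[OF N.factorgroup_is_group] dim_pos])
    fix C D assume "C \<in> carrier (G Mod N)" "D \<in> carrier (G Mod N)"
    then obtain x y where x: "x \<in> carrier G" "C = N #> x" and y: "y \<in> carrier G" "D = N #> y"
      unfolding carrier_FactGroup by blast
    show "\<rho> (r C) \<in> carrier_mat n n \<and> invertible_mat (\<rho> (r C))"
      using r[OF x(1)] x rep_carrier rep_invertible by simp
    show "\<rho> (r C) * \<rho> (r D) = \<beta> C D \<cdot>\<^sub>m \<rho> (r (C \<otimes>\<^bsub>G Mod N\<^esub> D))"
      using factor_set[OF x(1) y(1)] N.rcos_sum[OF x(1) y(1)] x y by simp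
    show "\<beta> C D \<noteq> 0" using \<beta>_nonzero[OF x(1) y(1)] x y by simp
  qed
  moreover have "\<alpha> x y = \<nu> x * \<nu> y / \<nu> (x \<otimes> y) * \<beta> (N #> x) (N #> y)"
    if x: "x \<in> carrier G" and y: "y \<in> carrier G" for x y
  proof -
    have xy: "x \<otimes> y \<in> carrier G" using x y by simp
    have "(\<alpha> x y * \<nu> (x \<otimes> y)) \<cdot>\<^sub>m \<rho> (r (N #> (x \<otimes> y))) = \<rho> x * \<rho> y"
      using rep_mult[OF x y] \<nu>[OF xy] by (simp add: smult_smult_mat)
    also have "\<dots> = (\<nu> x * \<nu> y) \<cdot>\<^sub>m (\<rho> (r (N #> x)) * \<rho> (r (N #> y)))"
      using \<nu>[OF x] \<nu>[OF y] rep_carrier r[OF x] r[OF y]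
      by (simp add: mult_smult_assoc_mat[of _ n n _ n] mult_smult_distrib[of _ n n _ n] smult_smult_mat
          mult.commute)
    also have "\<dots> = (\<nu> x * \<nu> y * \<beta> (N #> x) (N #> y)) \<cdot>\<^sub>m \<rho> (r (N #> (x \<otimes> y)))"
      using factor_set[OF x y] by (simp add: smult_smult_mat)
    finally have "\<alpha> x y * \<nu> (x \<otimes> y) = \<nu> x * \<nu> y * \<beta> (N #> x) (N #> y)"
      using rep_smult_cancel r[OF xy] by blast
    thus ?thesis using \<nu>[OF xy] by (simp add: field_simps)
  qed
  hence "cohomologous G \<alpha> (inflation G N \<beta>)"
    unfolding cohomologous_def inflation_def using \<nu> by blast
  ultimately show ?thesis unfolding in_inflation_image_def by blast
qed

lemma not_in_inflation_image_if_faithful: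
  assumes irr: "irreducible_rep G n \<rho>" and faithful: "faithful_rep G n \<rho>"
    and N: "central_subgroup N G" "N \<noteq> {\<one>}"
  shows "\<not> in_inflation_image G N \<alpha>"
proof
  assume "in_inflation_image G N \<alpha>"
  hence "N \<subseteq> {\<one>}" using central_subgroup_subset_proj_kernel[OF irr N(1)] faithful
    unfolding faithful_rep_def by blast
  moreover have "\<one> \<in> N" using N(1) unfolding central_subgroup_def by (blast intro: subgroup.one_closed)
  ultimately show False using N(2) by blast
qed

lemma faithful_if_not_in_inflation_image:
  assumes fin: "finite (carrier G)" and ord: "card (carrier G) = p ^ e" and p: "prime p"
    and no_inflation: "\<And>N. central_subgroup N G \<Longrightarrow> N \<noteq> {\<one>} \<Longrightarrow> \<not> in_inflation_image G N \<alpha>"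
  shows "faithful_rep G n \<rho>"
proof -
  let ?N = "proj_kernel G n \<rho> \<inter> center G"
  have "central_subgroup ?N G" by (rule central_subgroup_Int_center[OF normal.axioms(1)[OF proj_kernel_normal]])
  moreover from this have "in_inflation_image G ?N \<alpha>"
    by (rule in_inflation_image_if_subset_proj_kernel[OF central_subgroup_normal]) blast
  ultimately have "?N = {\<one>}" using no_inflation by blast
  hence "proj_kernel G n \<rho> = {\<one>}"
    using p_group_normal_subgroup_meets_center[OF fin ord p proj_kernel_normal] by blast
  thus ?thesis unfolding faithful_rep_def .
qed

end

theorem theorem3p1:
  fixes G :: "('a, 'b) monoid_scheme" and p :: nat and \<alpha> :: "'a \<Rightarrow> 'a \<Rightarrow> complex"
  assumes "p_group p G"
    and "cocycle2 G \<alpha>"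
    and "\<alpha> \<one>\<^bsub>G\<^esub> \<one>\<^bsub>G\<^esub> = 1"
  shows "(\<exists>n \<rho>. alpha_rep G \<alpha> n \<rho> \<and> irreducible_rep G n \<rho> \<and> faithful_rep G n \<rho>) \<longleftrightarrow>
         (\<forall>N. central_subgroup N G \<and> N \<noteq> {\<one>\<^bsub>G\<^esub>} \<longrightarrow> \<not> in_inflation_image G N \<alpha>)"
proof -
  obtain e where "group G" "prime p" "finite (carrier G)" "card (carrier G) = p ^ e"
    using assms(1) unfolding p_group_def Coset.order_def by blast
  interpret normalized_cocycle G \<alpha>
    using \<open>group G\<close> assms(2,3) by (simp add: normalized_cocycle_def normalized_cocycle_axioms_def)
  have rep: "alpha_representation G \<alpha> n \<rho>" if "alpha_rep G \<alpha> n \<rho>" "irreducible_rep G n \<rho>" for n \<rho>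
    using that by unfold_locales (simp_all add: irreducible_rep_def)
  show ?thesis
  proof
    assume "\<exists>n \<rho>. alpha_rep G \<alpha> n \<rho> \<and> irreducible_rep G n \<rho> \<and> faithful_rep G n \<rho>"
    thus "\<forall>N. central_subgroup N G \<and> N \<noteq> {\<one>\<^bsub>G\<^esub>} \<longrightarrow> \<not> in_inflation_image G N \<alpha>"
      using alpha_representation.not_in_inflation_image_if_faithful[OF rep] by blast
  next
    assume "\<forall>N. central_subgroup N G \<and> N \<noteq> {\<one>\<^bsub>G\<^esub>} \<longrightarrow> \<not> in_inflation_image G N \<alpha>"
    moreover obtain n \<rho> where "alpha_rep G \<alpha> n \<rho>" "irreducible_rep G n \<rho>"
      using exists_irreducible_alpha_rep[OF \<open>finite (carrier G)\<close>] by blast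
    ultimately show "\<exists>n \<rho>. alpha_rep G \<alpha> n \<rho> \<and> irreducible_rep G n \<rho> \<and> faithful_rep G n \<rho>"
      using alpha_representation.faithful_if_not_in_inflation_image[OF rep
          \<open>finite (carrier G)\<close> \<open>card (carrier G) = p ^ e\<close> \<open>prime p\<close>] by blast
  qed
qed

end
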